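(* Let $k\geq 1$, $m\neq 0$, and $K=J(2k+1,2m)$ with the knot group presentation $\langle a,b\mid w^m a=bw^m\rangle$, $w=(ba^{-1})^k ba(b^{-1}a)^k$. Let $\phi_K(x,y)$ be the Riley polynomial for this presentation, and put $\lambda=\lambda_k(x,y)=x^2-y-(y-2)(y+2-x^2)S_k(y)S_{k-1}(y)$ and $\alpha=\alpha_k(x,y)=1+(y+2-x^2)S_{k-1}(y)\big(S_k(y)-S_{k-1}(y)\big)$. Then if $m\geq 1$, $\phi_K(x,y)=S_{m-1}(\lambda)\,\alpha-S_{m-2}(\lambda)$; if $m\leq -1$, $\phi_K(x,y)=S_{|m|}(\lambda)-S_{|m|-1}(\lambda)\,\alpha$.
   Context: Chebyshev polynomials: $S_0(z)=1$, $S_1(z)=z$, $S_{n+1}(z)=zS_n(z)-S_{n-1}(z)$, with the convention $S_{-1}=0$. $J(2k+1,2m)$ is the double twist knot (two-bridge knot with twist regions of $2k+1$ and $2m$ signed half-twists) whose group has the stated presentation with $a,b$ meridians. Riley polynomial: for a presentation $\langle a,b\mid va=bv\rangle$ with $a,b$ meridians, set $A=\begin{bmatrix}s&1\\0&s^{-1}\end{bmatrix}$, $B=\begin{bmatrix}s&0\\2-y&s^{-1}\end{bmatrix}$, $V$ = $v$ evaluated at $A,B$; the $(1,2)$-entry of $VA-BV$ equals $f(s+s^{-1},y)$ for a polynomial $f\in\mathbb{Z}[x,y]$, and $\phi_K(x,y):=f(x,y)$ (here $v=w^m$). *)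

theory Defs
  imports "HOL-Analysis.Analysis"
begin

(* Chebyshev polynomials, shifted: cheb_aux n z = S_{n-1}(z), so cheb_aux 0 = S_{-1} = 0 *)
fun cheb_aux :: "nat \<Rightarrow> complex \<Rightarrow> complex" where
  "cheb_aux 0 z = 0"
| "cheb_aux (Suc 0) z = 1"
| "cheb_aux (Suc (Suc n)) z = z * cheb_aux (Suc n) z - cheb_aux n z"

definition cheb_S :: "int \<Rightarrow> complex \<Rightarrow> complex" where
  "cheb_S n z = cheb_aux (nat (n + 1)) z"

type_synonym cmat2 = "complex ^ 2 ^ 2"

definition mat2 :: "complex \<Rightarrow> complex \<Rightarrow> complex \<Rightarrow> complex \<Rightarrow> cmat2" where
  "mat2 p q r t = (\<chi> i j. if i = 1 then (if j = 1 then p else q) else (if j = 1 then r else t))"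

definition mpow :: "cmat2 \<Rightarrow> nat \<Rightarrow> cmat2" where
  "mpow M n = (((**) M) ^^ n) (mat 1)"

definition mzpow :: "cmat2 \<Rightarrow> int \<Rightarrow> cmat2" where
  "mzpow M n = (if n \<ge> 0 then mpow M (nat n) else mpow (matrix_inv M) (nat (- n)))"

definition riley_A :: "complex \<Rightarrow> cmat2" where
  "riley_A s = mat2 s 1 0 (inverse s)"

definition riley_B :: "complex \<Rightarrow> complex \<Rightarrow> cmat2" where
  "riley_B s y = mat2 s 0 (2 - y) (inverse s)"

definition word_W :: "nat \<Rightarrow> complex \<Rightarrow> complex \<Rightarrow> cmat2" where
  "word_W k s y = (let A = riley_A s; B = riley_B s y in
     mpow (B ** matrix_inv A) k ** B ** A ** mpow (matrix_inv B ** A) k)"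

definition riley_entry :: "nat \<Rightarrow> int \<Rightarrow> complex \<Rightarrow> complex \<Rightarrow> complex" where
  "riley_entry k m s y = (let A = riley_A s; B = riley_B s y; V = mzpow (word_W k s y) m in
     (V ** A - B ** V) $ 1 $ 2)"

definition lambda_k :: "nat \<Rightarrow> complex \<Rightarrow> complex \<Rightarrow> complex" where
  "lambda_k k x y = x^2 - y - (y - 2) * (y + 2 - x^2) * cheb_S (int k) y * cheb_S (int k - 1) y"

definition alpha_k :: "nat \<Rightarrow> complex \<Rightarrow> complex \<Rightarrow> complex" where
  "alpha_k k x y = 1 + (y + 2 - x^2) * cheb_S (int k - 1) y * (cheb_S (int k) y - cheb_S (int k - 1) y)"

end

theory Submission
  imports Defs
begin

text \<open>
  With \<open>P = B A^-1\<close> and \<open>Q = B^-1 A\<close> we have \<open>W = P^k B A Q^k\<close>. For a 2x2 matrix \<open>M\<close>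
  of determinant 1, Cayley--Hamilton gives \<open>M^n = S_{n-1}(tr M) M - S_{n-2}(tr M) I\<close>. Both \<open>P\<close>
  and \<open>Q\<close> have trace \<open>y\<close>, which makes \<open>W\<close> explicit; reducing modulo \<open>s s^-1 = 1\<close> and the
  Cassini identity \<open>S_{k-1}^2 - y S_{k-1} S_{k-2} + S_{k-2}^2 = 1\<close> gives \<open>tr W = \<lambda>\<close>. The Riley
  entry \<open>V \<mapsto> (V A - B V)_12 = V_11 - V_12 (s - s^-1)\<close> is linear in \<open>V\<close>, equals 1 at \<open>I\<close> and
  \<open>\<alpha>\<close> at \<open>W\<close>. Cayley--Hamilton applied to \<open>W\<close> (for \<open>m < 0\<close> to \<open>W^-1 = \<lambda> I - W\<close>, where the
  entry is \<open>\<lambda> - \<alpha>\<close>) then yields the formula.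
\<close>

lemma mat2_nth [simp]:
  "mat2 a b c d $ 1 $ 1 = a" "mat2 a b c d $ 1 $ 2 = b"
  "mat2 a b c d $ 2 $ 1 = c" "mat2 a b c d $ 2 $ 2 = d"
  by (simp_all add: mat2_def)

lemma mat2_eta: "M = mat2 (M $ 1 $ 1) (M $ 1 $ 2) (M $ 2 $ 1) (M $ 2 $ 2)"
  by (simp add: mat2_def vec_eq_iff forall_2)

lemma mat2_eq_iff: "mat2 a b c d = mat2 a' b' c' d' \<longleftrightarrow> a = a' \<and> b = b' \<and> c = c' \<and> d = d'"
  by (auto simp: mat2_def vec_eq_iff forall_2)

lemma mat2_mult:
  "mat2 a b c d ** mat2 e f g h = mat2 (a*e + b*g) (a*f + b*h) (c*e + d*g) (c*f + d*h)"
  by (simp add: mat2_def matrix_matrix_mult_def vec_eq_iff forall_2 sum_2)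

lemma mat_1_eq_mat2: "mat 1 = mat2 1 0 0 1"
  by (simp add: mat2_def mat_def vec_eq_iff forall_2)

lemma mat2_diff: "mat2 a b c d - mat2 e f g h = mat2 (a - e) (b - f) (c - g) (d - h)"
  by (simp add: mat2_def vec_eq_iff forall_2)

lemma det_mat2: "det (mat2 a b c d) = a * d - b * c"
  by (simp add: det_2)

lemma trace_mat2: "trace (mat2 a b c d) = a + d"
  by (simp add: trace_def UNIV_2)

lemma matrix_inv_unique:
  fixes M N :: cmat2
  assumes "M ** N = mat 1" and "N ** M = mat 1"
  shows "matrix_inv M = N"
proof -
  have inv: "M ** matrix_inv M = mat 1 \<and> matrix_inv M ** M = mat 1"
    unfolding matrix_inv_def by (rule someI[of _ N]) (use assms in auto)
  then have "matrix_inv M = matrix_inv M ** (M ** N)"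
    using assms by simp
  also have "\<dots> = N"
    using inv by (simp add: matrix_mul_assoc)
  finally show ?thesis .
qed

lemma matrix_inv_mat2:
  assumes "a * d - b * c = 1"
  shows "matrix_inv (mat2 a b c d) = mat2 d (- b) (- c) a"
  by (rule matrix_inv_unique)
    (use assms in \<open>simp_all add: mat2_mult mat_1_eq_mat2 mat2_eq_iff algebra_simps\<close>)

lemma mpow_0: "mpow M 0 = mat 1"
  and mpow_Suc: "mpow M (Suc n) = M ** mpow M n"
  by (simp_all add: mpow_def)

lemma det_mpow: "det (mpow M n) = det M ^ n"
  by (induction n) (simp_all add: mpow_0 mpow_Suc det_mul)

lemma cheb_aux_cassini:
  "(cheb_aux (Suc n) z)\<^sup>2 - z * cheb_aux (Suc n) z * cheb_aux n z + (cheb_aux n z)\<^sup>2 = 1"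
  by (induction n) (simp_all add: algebra_simps power2_eq_square)

lemma cheb_S_int: "cheb_S (int n) z = cheb_aux (Suc n) z"
  by (simp add: cheb_S_def nat_add_distrib)

lemma cheb_S_int_minus_1: "cheb_S (int n - 1) z = cheb_aux n z"
  by (simp add: cheb_S_def)

lemma mpow_mat2:
  assumes "a * d - b * c = 1"
  shows "mpow (mat2 a b c d) (Suc n) =
    (let p = cheb_aux (Suc n) (a + d); q = cheb_aux n (a + d)
     in mat2 (p * a - q) (p * b) (p * c) (p * d - q))"
proof (induction n)
  case 0
  show ?case by (simp add: mpow_0 mpow_Suc mat_1_eq_mat2 mat2_mult)
next
  case (Suc n)
  show ?case
    unfolding mpow_Suc[of _ "Suc n"] Suc Let_def mat2_mult mat2_eq_iff cheb_aux.simps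
    using assms by algebra
qed

lemma riley_entry_mat2:
  "(mat2 a b c d ** riley_A s - riley_B s y ** mat2 a b c d) $ 1 $ 2 = a - b * (s - inverse s)"
  by (simp add: riley_A_def riley_B_def mat2_mult mat2_diff algebra_simps)

lemma riley_entry_mpow:
  assumes "a * d - b * c = 1"
  shows "(mpow (mat2 a b c d) (Suc n) ** riley_A s - riley_B s y ** mpow (mat2 a b c d) (Suc n)) $ 1 $ 2
    = cheb_aux (Suc n) (a + d) * (a - b * (s - inverse s)) - cheb_aux n (a + d)"
  unfolding mpow_mat2[OF assms] Let_def riley_entry_mat2 by (simp add: algebra_simps)

lemma riley_entry_mzpow:
  fixes a b c d s :: complex and m :: int
  assumes det: "a * d - b * c = 1" and "m \<noteq> 0"
  defines "l \<equiv> a + d" and "e \<equiv> a - b * (s - inverse s)"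
  shows "(mzpow (mat2 a b c d) m ** riley_A s - riley_B s y ** mzpow (mat2 a b c d) m) $ 1 $ 2 =
    (if m \<ge> 1 then cheb_S (m - 1) l * e - cheb_S (m - 2) l
     else cheb_S \<bar>m\<bar> l - cheb_S (\<bar>m\<bar> - 1) l * e)"
proof (cases "m \<ge> 1")
  case True
  then obtain n where m: "m = int (Suc n)"
    by (intro that[of "nat (m - 1)"]) simp
  have "mzpow (mat2 a b c d) m = mpow (mat2 a b c d) (Suc n)"
    by (simp add: mzpow_def m del: of_nat_Suc)
  moreover have "cheb_S (m - 1) l = cheb_aux (Suc n) l" "cheb_S (m - 2) l = cheb_aux n l"
    using cheb_S_int[of n l] cheb_S_int_minus_1[of n l] by (simp_all add: m)
  ultimately show ?thesis
    using True by (simp only: riley_entry_mpow[OF det] l_def e_def) simp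
next
  case False
  with \<open>m \<noteq> 0\<close> obtain n where m: "m = - int (Suc n)"
    by (intro that[of "nat (- m - 1)"]) simp
  have det': "d * a - (- b) * (- c) = 1"
    using det by (simp add: algebra_simps)
  have "mzpow (mat2 a b c d) m = mpow (mat2 d (- b) (- c) a) (Suc n)"
    by (simp add: mzpow_def m matrix_inv_mat2[OF det] del: of_nat_Suc)
  moreover have "cheb_S \<bar>m\<bar> l = l * cheb_aux (Suc n) l - cheb_aux n l"
    "cheb_S (\<bar>m\<bar> - 1) l = cheb_aux (Suc n) l"
    using cheb_S_int[of "Suc n" l] cheb_S_int_minus_1[of "Suc n" l] by (simp_all add: m add.commute)
  ultimately show ?thesis
    using False by (simp only: riley_entry_mpow[OF det'] l_def e_def) (simp add: algebra_simps)
qed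

lemma riley_B_inv_A:
  assumes "s \<noteq> 0"
  shows "riley_B s y ** matrix_inv (riley_A s) = mat2 1 (- s) ((2 - y) * inverse s) (y - 1)"
  using assms by (simp add: riley_A_def riley_B_def matrix_inv_mat2 mat2_mult)

lemma inv_riley_B_A:
  assumes "s \<noteq> 0"
  shows "matrix_inv (riley_B s y) ** riley_A s = mat2 1 (inverse s) ((y - 2) * s) (y - 1)"
  using assms by (simp add: riley_A_def riley_B_def matrix_inv_mat2 mat2_mult)

lemma det_word_W:
  assumes "s \<noteq> 0"
  shows "det (word_W k s y) = 1"
  unfolding word_W_def Let_def riley_B_inv_A[OF assms] inv_riley_B_A[OF assms]
  using assms by (simp add: det_mul det_mpow det_mat2 riley_A_def riley_B_def field_simps)

lemma word_W_Suc:
  assumes "s \<noteq> 0"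
  shows "word_W (Suc j) s y =
    (let u = cheb_aux (Suc j) y; v = cheb_aux j y; t = inverse s
     in mat2 (u - v) (- u * s) (u * ((2 - y) * t)) (u * (y - 1) - v) ** mat2 s 0 (2 - y) t **
        mat2 s 1 0 t ** mat2 (u - v) (u * t) (u * ((y - 2) * s)) (u * (y - 1) - v))"
proof -
  have det_P: "1 * (y - 1) - (- s) * ((2 - y) * inverse s) = 1"
    and det_Q: "1 * (y - 1) - inverse s * ((y - 2) * s) = 1"
    using assms by (simp_all add: field_simps)
  show ?thesis
    unfolding word_W_def Let_def riley_B_inv_A[OF assms] inv_riley_B_A[OF assms]
      mpow_mat2[OF det_P] mpow_mat2[OF det_Q]
    by (simp add: riley_A_def riley_B_def mult.commute)
qed

lemma word_W_invariants:
  assumes "s \<noteq> 0" and "k \<ge> 1"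
  shows "trace (word_W k s y) = lambda_k k (s + inverse s) y"
    and "word_W k s y $ 1 $ 1 - word_W k s y $ 1 $ 2 * (s - inverse s) = alpha_k k (s + inverse s) y"
proof -
  obtain j where k: "k = Suc j"
    using assms(2) by (cases k) auto
  define u v where "u = cheb_aux (Suc j) y" and "v = cheb_aux j y"
  have cassini: "u\<^sup>2 - y * u * v + v\<^sup>2 = 1"
    using cheb_aux_cassini[of j y] by (simp add: u_def v_def)
  have inverse: "s * inverse s = 1"
    using assms(1) by simp
  have S: "cheb_S (int k) y = y * u - v" "cheb_S (int k - 1) y = u"
    unfolding k u_def v_def cheb_S_int cheb_S_int_minus_1 by simp_all
  show "trace (word_W k s y) = lambda_k k (s + inverse s) y"
    unfolding lambda_k_def S
    unfolding k word_W_Suc[OF assms(1)] Let_def u_def[symmetric] v_def[symmetric]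
      trace_mat2 mat2_mult
    using cassini inverse by algebra
  show "word_W k s y $ 1 $ 1 - word_W k s y $ 1 $ 2 * (s - inverse s) = alpha_k k (s + inverse s) y"
    unfolding alpha_k_def S
    unfolding k word_W_Suc[OF assms(1)] Let_def u_def[symmetric] v_def[symmetric]
      mat2_mult mat2_nth
    using cassini inverse by algebra
qed

theorem proposition4p4:
  fixes k :: nat and m :: int and s y :: complex
  assumes "k \<ge> 1" and "m \<noteq> 0" and "s \<noteq> 0"
  shows "riley_entry k m s y =
    (let x = s + inverse s; l = lambda_k k x y; a = alpha_k k x y in
      if m \<ge> 1 then cheb_S (m - 1) l * a - cheb_S (m - 2) l
      else cheb_S (\<bar>m\<bar>) l - cheb_S (\<bar>m\<bar> - 1) l * a)"
proof -
  define W where "W = word_W k s y"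
  have W: "W = mat2 (W $ 1 $ 1) (W $ 1 $ 2) (W $ 2 $ 1) (W $ 2 $ 2)"
    by (rule mat2_eta)
  have det: "W $ 1 $ 1 * W $ 2 $ 2 - W $ 1 $ 2 * W $ 2 $ 1 = 1"
    using det_word_W[OF assms(3), of k y] by (simp add: det_2 W_def)
  have "W $ 1 $ 1 + W $ 2 $ 2 = lambda_k k (s + inverse s) y"
    using word_W_invariants(1)[OF assms(3,1), of y] by (simp add: trace_def UNIV_2 W_def)
  moreover have "W $ 1 $ 1 - W $ 1 $ 2 * (s - inverse s) = alpha_k k (s + inverse s) y"
    using word_W_invariants(2)[OF assms(3,1), of y] by (simp add: W_def)
  ultimately show ?thesis
    unfolding riley_entry_def Let_def W_def[symmetric]
    using riley_entry_mzpow[OF det assms(2), of s y] W by simp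
qed

end
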